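(* Let $t\in(1,2]$ and $n\in\mathbb{Z}^{+}$. Then: (a) $k(n,t)\geq \lfloor a(t)n\rfloor$; (b) $k(n,t)>0$ if and only if $n+1\leq t^n$; (c) $l(n,t)\geq \lfloor b(t)n\rfloor$; (d) $l(n,t)>0$ if and only if $2(n+1)\leq t^n$.
   Context: Let $f,g:(0,\infty)\to\mathbb{R}$ be $f(x)=\frac{(1+x)^{1+x}}{x^x}$ and $g(x)=\frac{2^x(1+x)^{1+x}}{x^x}$; both are strictly increasing with $\lim_{x\to0^+}f(x)=\lim_{x\to0^+}g(x)=1$. For $t\in(1,\infty)$, $a(t)$ and $b(t)$ denote the unique solutions $x>0$ of $f(x)=t$ and $g(x)=t$, respectively. For $t\in(1,2]$ and $n\in\mathbb{Z}^+$, $k(n,t)$ is the nonnegative integer with $\binom{n+k(n,t)}{n}\leq t^n<\binom{n+k(n,t)+1}{n}$, and $l(n,t)$ is the nonnegative integer with $2^{l(n,t)}\binom{n+l(n,t)}{n}\leq t^n<2^{l(n,t)+1}\binom{n+l(n,t)+1}{n}$. *)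

theory Defs
  imports "HOL-Analysis.Analysis"
begin

definition f_fun :: "real \<Rightarrow> real" where
  "f_fun x = (1 + x) powr (1 + x) / x powr x"

definition g_fun :: "real \<Rightarrow> real" where
  "g_fun x = 2 powr x * (1 + x) powr (1 + x) / x powr x"

definition a_fun :: "real \<Rightarrow> real" where
  "a_fun t = (THE x. 0 < x \<and> f_fun x = t)"

definition b_fun :: "real \<Rightarrow> real" where
  "b_fun t = (THE x. 0 < x \<and> g_fun x = t)"

definition k_fun :: "nat \<Rightarrow> real \<Rightarrow> nat" where
  "k_fun n t = (THE k. real ((n + k) choose n) \<le> t ^ n \<and> t ^ n < real ((n + k + 1) choose n))"

definition l_fun :: "nat \<Rightarrow> real \<Rightarrow> nat" where
  "l_fun n t = (THE l. 2 ^ l * real ((n + l) choose n) \<le> t ^ n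
                      \<and> t ^ n < 2 ^ (l + 1) * real ((n + l + 1) choose n))"

end

theory Submission
  imports Defs "HOL-Real_Asymp.Real_Asymp"
begin

text \<open>
  As \<open>k \<mapsto> (n+k choose n)\<close> and \<open>k \<mapsto> 2^k (n+k choose n)\<close> are strictly increasing,
  \<open>k(n,t)\<close> and \<open>l(n,t)\<close> are the largest \<open>k\<close> at which they are at most \<open>t^n\<close>; so (b)
  and (d) compare \<open>t^n\<close> with their values \<open>n+1\<close> and \<open>2(n+1)\<close> at \<open>k = 1\<close>. For (a) and
  (c), the single term of index \<open>n\<close> in the binomial expansion of \<open>(n+m)^(n+m)\<close> gives
  \<open>(n+m choose n) \<le> (n+m)^(n+m) / (n^n m^m) = f(m/n)^n\<close>, hence also
  \<open>2^m (n+m choose n) \<le> g(m/n)^n\<close>. Since \<open>f\<close> and \<open>g\<close> are increasing, both bounds are at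
  most \<open>t^n\<close> for \<open>m = \<lfloor>a(t) n\<rfloor>\<close> resp. \<open>m = \<lfloor>b(t) n\<rfloor>\<close>.
\<close>

lemma strict_mono_sublevel_Greatest:
  fixes h :: "nat \<Rightarrow> nat"
  assumes "strict_mono h" and "real (h j) \<le> y"
  shows "real (h (GREATEST k. real (h k) \<le> y)) \<le> y"
    and "j \<le> (GREATEST k. real (h k) \<le> y)"
proof -
  have bounded: "k \<le> nat \<lfloor>y\<rfloor>" if "real (h k) \<le> y" for k
    using strict_mono_imp_increasing[OF assms(1), of k] that
    by (simp add: le_nat_floor)
  show "real (h (GREATEST k. real (h k) \<le> y)) \<le> y"
    by (rule GreatestI_nat[where P = "\<lambda>k. real (h k) \<le> y", OF assms(2) bounded])
  show "j \<le> (GREATEST k. real (h k) \<le> y)"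
    by (rule Greatest_le_nat[where P = "\<lambda>k. real (h k) \<le> y", OF assms(2) bounded])
qed

lemma strict_mono_step_eq_Greatest:
  fixes h :: "nat \<Rightarrow> nat"
  assumes mono: "strict_mono h" and "real (h 0) \<le> y"
  shows "(THE k. real (h k) \<le> y \<and> y < real (h (Suc k))) = (GREATEST k. real (h k) \<le> y)"
proof (rule the_equality)
  let ?G = "GREATEST k. real (h k) \<le> y"
  have "\<not> Suc ?G \<le> ?G" by simp
  then show "real (h ?G) \<le> y \<and> y < real (h (Suc ?G))"
    using strict_mono_sublevel_Greatest[OF mono] assms(2) by (metis not_le)
  fix k assume k: "real (h k) \<le> y \<and> y < real (h (Suc k))"
  then have "k \<le> ?G" by (blast intro: strict_mono_sublevel_Greatest(2)[OF mono])
  moreover have "h ?G < h (Suc k)"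
    using k strict_mono_sublevel_Greatest(1)[OF mono] by fastforce
  then have "?G < Suc k" using mono by (simp add: strict_mono_less)
  ultimately show "k = ?G" by simp
qed

lemma strict_mono_Greatest_pos_iff:
  fixes h :: "nat \<Rightarrow> nat"
  assumes mono: "strict_mono h" and "real (h 0) \<le> y"
  shows "0 < (GREATEST k. real (h k) \<le> y) \<longleftrightarrow> real (h 1) \<le> y"
proof
  assume "0 < (GREATEST k. real (h k) \<le> y)"
  then have "h 1 \<le> h (GREATEST k. real (h k) \<le> y)"
    using mono by (simp add: strict_mono_less_eq)
  then show "real (h 1) \<le> y"
    using strict_mono_sublevel_Greatest(1)[OF mono assms(2)] by linarith
qed (use strict_mono_sublevel_Greatest(2)[OF mono, of 1 y] in auto)

lemma strict_mono_binomial_top: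
  assumes "0 < n"
  shows "strict_mono (\<lambda>k. (n + k) choose n)"
proof (rule strict_monoI_Suc)
  fix k
  obtain n' where n: "n = Suc n'" using assms not0_implies_Suc by blast
  have "(n + Suc k) choose n = ((n + k) choose n') + ((n + k) choose n)"
    by (simp add: n)
  moreover have "0 < (n + k) choose n'" by (simp add: n)
  ultimately show "(n + k) choose n < (n + Suc k) choose n" by linarith
qed

lemma strict_mono_two_power_mult:
  fixes h :: "nat \<Rightarrow> nat"
  assumes "strict_mono h"
  shows "strict_mono (\<lambda>k. 2 ^ k * h k)"
proof (rule strict_monoI_Suc)
  fix k
  have "2 ^ k * h k < 2 ^ k * h (Suc k)"
    using assms by (simp add: strict_mono_less)
  also have "\<dots> \<le> 2 ^ Suc k * h (Suc k)" by simp
  finally show "2 ^ k * h k < 2 ^ Suc k * h (Suc k)" .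
qed

lemma k_fun_eq_Greatest:
  assumes "0 < n" and "1 \<le> t ^ n"
  shows "k_fun n t = (GREATEST k. real ((n + k) choose n) \<le> t ^ n)"
  using strict_mono_step_eq_Greatest[of "\<lambda>k. (n + k) choose n" "t ^ n"] assms
    strict_mono_binomial_top
  by (simp add: k_fun_def)

lemma l_fun_eq_Greatest:
  assumes "0 < n" and "1 \<le> t ^ n"
  shows "l_fun n t = (GREATEST k. real (2 ^ k * ((n + k) choose n)) \<le> t ^ n)"
  using strict_mono_step_eq_Greatest[of "\<lambda>k. 2 ^ k * ((n + k) choose n)" "t ^ n"] assms
    strict_mono_two_power_mult[OF strict_mono_binomial_top]
  by (simp add: l_fun_def)

lemma strict_mono_on_pos_root:
  fixes \<phi> :: "real \<Rightarrow> real"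
  assumes mono: "strict_mono_on {0<..} \<phi>" and cont: "continuous_on {0<..} \<phi>"
    and lim_0: "(\<phi> \<longlongrightarrow> 0) (at_right 0)" and lim_top: "filterlim \<phi> at_top at_top"
    and "0 < c"
  shows "\<exists>!x. 0 < x \<and> \<phi> x = c"
proof -
  have "\<forall>\<^sub>F x in at_right 0. 0 < x \<and> \<phi> x < c"
    using eventually_at_right_less order_tendstoD(2)[OF lim_0 \<open>0 < c\<close>] by (rule eventually_conj)
  then obtain e where e: "0 < e" "\<phi> e < c"
    using eventually_happens' trivial_limit_at_right_real by blast
  have "\<forall>\<^sub>F x in at_top. e < x \<and> c \<le> \<phi> x"
    using eventually_gt_at_top lim_top[unfolded filterlim_at_top, rule_format, of c]
    by (rule eventually_conj)
  then obtain M where M: "e < M" "c \<le> \<phi> M"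
    using eventually_happens' by force
  have "continuous_on {e..M} \<phi>"
    using cont by (rule continuous_on_subset) (use e in auto)
  then obtain x where x: "e \<le> x" "\<phi> x = c"
    using IVT'[of \<phi> e c M] e M by auto
  show ?thesis
  proof (rule ex1I)
    show "0 < x \<and> \<phi> x = c" using x e by simp
    show "y = x" if "0 < y \<and> \<phi> y = c" for y
      using inj_onD[OF strict_mono_on_imp_inj_on[OF mono]] that x e by simp
  qed
qed

definition log_f :: "real \<Rightarrow> real" where
  "log_f x = (1 + x) * ln (1 + x) - x * ln x"

definition log_g :: "real \<Rightarrow> real" where
  "log_g x = log_f x + x * ln 2"

lemma f_fun_eq_exp_log_f: "0 < x \<Longrightarrow> f_fun x = exp (log_f x)"
  by (simp add: f_fun_def log_f_def powr_def exp_diff)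

lemma g_fun_eq_exp_log_g: "0 < x \<Longrightarrow> g_fun x = exp (log_g x)"
  by (simp add: g_fun_def log_g_def log_f_def powr_def exp_diff exp_add mult.commute)

lemma log_f_has_real_derivative:
  "0 < x \<Longrightarrow> (log_f has_real_derivative ln (1 + x) - ln x) (at x)"
  unfolding log_f_def [abs_def] by (auto intro!: derivative_eq_intros simp: field_simps)

lemma strict_mono_on_log_f: "strict_mono_on {0<..} log_f"
proof (rule strict_mono_onI)
  fix x y :: real
  assume "x \<in> {0<..}" and "x < y"
  show "log_f x < log_f y"
  proof (rule DERIV_pos_imp_increasing[OF \<open>x < y\<close>])
    fix z assume "x \<le> z"
    with \<open>x \<in> {0<..}\<close> have "0 < z" by simp
    then show "\<exists>d. (log_f has_real_derivative d) (at z) \<and> 0 < d"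
      by (intro exI[of _ "ln (1 + z) - ln z"]) (simp add: log_f_has_real_derivative)
  qed
qed

lemma strict_mono_on_log_g: "strict_mono_on {0<..} log_g"
  using strict_mono_onD[OF strict_mono_on_log_f]
  by (intro strict_mono_onI) (auto simp: log_g_def intro!: add_strict_mono)

lemma continuous_on_log_f: "continuous_on {0<..} log_f"
  unfolding log_f_def by (auto intro!: continuous_intros)

lemma continuous_on_log_g: "continuous_on {0<..} log_g"
  unfolding log_g_def log_f_def by (auto intro!: continuous_intros)

lemma log_f_at_right_0: "(log_f \<longlongrightarrow> 0) (at_right 0)"
  unfolding log_f_def [abs_def] by real_asymp

lemma log_g_at_right_0: "(log_g \<longlongrightarrow> 0) (at_right 0)"
  unfolding log_g_def [abs_def] log_f_def by real_asymp

lemma log_f_at_top: "filterlim log_f at_top at_top"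
  unfolding log_f_def [abs_def] by real_asymp

lemma log_g_at_top: "filterlim log_g at_top at_top"
  unfolding log_g_def [abs_def] log_f_def by real_asymp

lemma a_fun_root:
  assumes "1 < t"
  shows "0 < a_fun t \<and> log_f (a_fun t) = ln t"
proof -
  have "(0 < x \<and> f_fun x = t) \<longleftrightarrow> (0 < x \<and> log_f x = ln t)" for x
    using assms by (auto simp: f_fun_eq_exp_log_f)
  then have "a_fun t = (THE x. 0 < x \<and> log_f x = ln t)"
    by (simp add: a_fun_def)
  then show ?thesis
    using theI'[OF strict_mono_on_pos_root[OF strict_mono_on_log_f continuous_on_log_f
          log_f_at_right_0 log_f_at_top]] assms by simp
qed

lemma b_fun_root:
  assumes "1 < t"
  shows "0 < b_fun t \<and> log_g (b_fun t) = ln t"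
proof -
  have "(0 < x \<and> g_fun x = t) \<longleftrightarrow> (0 < x \<and> log_g x = ln t)" for x
    using assms by (auto simp: g_fun_eq_exp_log_g)
  then have "b_fun t = (THE x. 0 < x \<and> log_g x = ln t)"
    by (simp add: b_fun_def)
  then show ?thesis
    using theI'[OF strict_mono_on_pos_root[OF strict_mono_on_log_g continuous_on_log_g
          log_g_at_right_0 log_g_at_top]] assms by simp
qed

lemma binomial_mult_powers_le:
  "real ((n + m) choose n) * real n ^ n * real m ^ m \<le> real (n + m) ^ (n + m)"
proof -
  have "real ((n + m) choose n) * real n ^ n * real m ^ (n + m - n)
      \<le> (\<Sum>k\<le>n + m. real ((n + m) choose k) * real n ^ k * real m ^ (n + m - k))"
    by (rule member_le_sum) auto
  also have "\<dots> = (real n + real m) ^ (n + m)"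
    by (rule binomial_ring [symmetric])
  finally show ?thesis by simp
qed

lemma ln_binomial_le_log_f:
  assumes "0 < n" and "0 < m"
  shows "ln (real ((n + m) choose n)) \<le> real n * log_f (real m / real n)"
proof -
  have "ln (real ((n + m) choose n) * real n ^ n * real m ^ m) \<le> ln (real (n + m) ^ (n + m))"
    using binomial_mult_powers_le[of n m] assms by (subst ln_le_cancel_iff) auto
  then have "ln (real ((n + m) choose n))
      \<le> real (n + m) * ln (real (n + m)) - real n * ln (real n) - real m * ln (real m)"
    using assms by (simp add: ln_mult ln_realpow)
  also have "\<dots> = real n * log_f (real m / real n)"
  proof -
    have "1 + real m / real n = real (n + m) / real n"
      using assms by (simp add: field_simps)
    then show ?thesis
      using assms by (simp add: log_f_def ln_div field_simps)
  qed
  finally show ?thesis .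
qed

lemma binomial_le_power_if_le_a_fun:
  assumes t: "1 < t" and n: "0 < n" and m: "real m \<le> a_fun t * real n"
  shows "real ((n + m) choose n) \<le> t ^ n"
proof (cases "m = 0")
  case False
  have "real m / real n \<le> a_fun t"
    using m n by (simp add: divide_le_eq)
  then have "log_f (real m / real n) \<le> log_f (a_fun t)"
    using a_fun_root[OF t] n False by (intro strict_mono_on_leD[OF strict_mono_on_log_f]) auto
  then have "log_f (real m / real n) \<le> ln t"
    using a_fun_root[OF t] by simp
  have "ln (real ((n + m) choose n)) \<le> real n * log_f (real m / real n)"
    using n False by (intro ln_binomial_le_log_f) auto
  also have "\<dots> \<le> real n * ln t"
    using \<open>log_f (real m / real n) \<le> ln t\<close> by (simp add: mult_left_mono)
  also have "\<dots> = ln (t ^ n)"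
    using t by (simp add: ln_realpow)
  finally show ?thesis using t by simp
qed (use t in simp)

lemma two_power_binomial_le_power_if_le_b_fun:
  assumes t: "1 < t" and n: "0 < n" and m: "real m \<le> b_fun t * real n"
  shows "2 ^ m * real ((n + m) choose n) \<le> t ^ n"
proof (cases "m = 0")
  case False
  have "real m / real n \<le> b_fun t"
    using m n by (simp add: divide_le_eq)
  then have "log_g (real m / real n) \<le> log_g (b_fun t)"
    using b_fun_root[OF t] n False by (intro strict_mono_on_leD[OF strict_mono_on_log_g]) auto
  then have "log_g (real m / real n) \<le> ln t"
    using b_fun_root[OF t] by simp
  have "ln (2 ^ m * real ((n + m) choose n)) = real m * ln 2 + ln (real ((n + m) choose n))"
    by (simp add: ln_mult ln_realpow)
  also have "\<dots> \<le> real m * ln 2 + real n * log_f (real m / real n)"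
    using n False by (simp add: ln_binomial_le_log_f)
  also have "\<dots> = real n * log_g (real m / real n)"
    using n by (simp add: log_g_def field_simps)
  also have "\<dots> \<le> real n * ln t"
    using \<open>log_g (real m / real n) \<le> ln t\<close> by (simp add: mult_left_mono)
  also have "\<dots> = ln (t ^ n)"
    using t by (simp add: ln_realpow)
  finally show ?thesis using t by simp
qed (use t in simp)

theorem lemma2p1:
  fixes t :: real and n :: nat
  assumes "1 < t" and "t \<le> 2" and "0 < n"
  shows "k_fun n t \<ge> nat \<lfloor>a_fun t * real n\<rfloor>
    \<and> (k_fun n t > 0 \<longleftrightarrow> real (n + 1) \<le> t ^ n)
    \<and> l_fun n t \<ge> nat \<lfloor>b_fun t * real n\<rfloor>
    \<and> (l_fun n t > 0 \<longleftrightarrow> 2 * real (n + 1) \<le> t ^ n)"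
proof -
  have "1 \<le> t ^ n" using assms(1) by simp
  note k_fun = k_fun_eq_Greatest[OF assms(3) this]
    and l_fun = l_fun_eq_Greatest[OF assms(3) this]
  have binomial_mono: "strict_mono (\<lambda>k. (n + k) choose n)"
    using assms(3) by (rule strict_mono_binomial_top)
  note two_power_binomial_mono = strict_mono_two_power_mult[OF binomial_mono]
  define ma where "ma = nat \<lfloor>a_fun t * real n\<rfloor>"
  define mb where "mb = nat \<lfloor>b_fun t * real n\<rfloor>"
  have "real ((n + ma) choose n) \<le> t ^ n"
    using a_fun_root[OF assms(1)] unfolding ma_def
    by (intro binomial_le_power_if_le_a_fun[OF assms(1,3)]) simp
  then have a: "ma \<le> k_fun n t"
    unfolding k_fun by (rule strict_mono_sublevel_Greatest(2)[OF binomial_mono])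
  have "real (2 ^ mb * ((n + mb) choose n)) \<le> t ^ n"
    using b_fun_root[OF assms(1)] two_power_binomial_le_power_if_le_b_fun[OF assms(1,3)]
    unfolding mb_def by simp
  then have c: "mb \<le> l_fun n t"
    unfolding l_fun by (rule strict_mono_sublevel_Greatest(2)[OF two_power_binomial_mono])
  have b: "0 < k_fun n t \<longleftrightarrow> real (n + 1) \<le> t ^ n"
    unfolding k_fun using strict_mono_Greatest_pos_iff[OF binomial_mono] \<open>1 \<le> t ^ n\<close> by simp
  have d: "0 < l_fun n t \<longleftrightarrow> 2 * real (n + 1) \<le> t ^ n"
    unfolding l_fun using strict_mono_Greatest_pos_iff[OF two_power_binomial_mono] \<open>1 \<le> t ^ n\<close>
    by simp
  show ?thesis using a b c d unfolding ma_def mb_def by blast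
qed

end
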